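(* Let $\mathcal{B}\subset\mathcal{B}(G)$ be a von Neumann algebra and $\vartheta$ a faithful strongly continuous $E_0$-semigroup on $\mathcal{B}$, with product system $E^\odot$ and intertwiner system $E'^\odot$. Let $(H,\rho,(w_t))$ be a strongly continuous right dilation of $E^\odot$, with $\eta_t$, $\vartheta^w$, $E'$, a unit vector $\xi'\in E'$, $H_t$ and $F'^\odot$ as described in the context. Then for each $t\ge0$ there is a unique unitary $\Upsilon_t:G\to H_t$ with $\Upsilon_t(xg)=\eta_t(x)\xi'g$ for all $x\in E_t=\mathcal{B}$, $g\in G$; the map $\nu_t:E'_t\to F'_t$, $\nu_t(x')=\Upsilon_tx'$, is a surjective, inner-product-preserving, $\mathcal{B}'$-bilinear map (with respect to the left actions of $\mathcal{B}'$ on $E'_t$ by operator multiplication and on $F'_t$ by $b'.y'=\vartheta^w_t(\xi'b'\xi'^* )y'$); and the $\nu_t$ form an isomorphism of product systems: $\nu_{s+t}(x'_s\hat x'_t)=\vartheta^w_t\big((\nu_sx'_s)\xi'^*\big)(\nu_t\hat x'_t)$ for all $s,t\ge0$, $x'_s\in E'_s$, $\hat x'_t\in E'_t$.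
   Context: An $E_0$-semigroup $\vartheta$ on $\mathcal{B}$: normal unital $*$-endomorphisms $\vartheta_t$, $\vartheta_0=\mathrm{id}$, $\vartheta_{s+t}=\vartheta_s\vartheta_t$; faithful: each $\vartheta_t$ injective; strongly continuous: $t\mapsto\vartheta_t(b)$ strongly continuous. Product system $E^\odot$ of $\vartheta$: $E_t:=\mathcal{B}$ with right action by operator multiplication, inner product $x^*y$, left action $b.x=\vartheta_t(b)x$, product $(x_s,y_t)\mapsto\vartheta_t(x_s)y_t$; a section $(x_t)$ is strongly continuous if $t\mapsto x_t\in\mathcal{B}(G)$ is strongly continuous. Intertwiner system $E'^\odot$: $E'_t:=\{x'\in\mathcal{B}(G):\vartheta_t(b)x'=x'b\ \forall b\in\mathcal{B}\}$, $\mathcal{B}'$-bimodule by operator multiplication, inner product $x'^*y'$, product $(x'_s,\hat x'_t)\mapsto x'_s\hat x'_t\in E'_{s+t}$. Strongly continuous right dilation: Hilbert space $H$, faithful normal unital representation $\rho$ of $\mathcal{B}$ on $H$, unitaries $w_t:E_t\odot H\to H$ (with $E_t\odot H$ the completion of $E_t\otimes H$ under $\langle x\otimes h,y\otimes k\rangle=\langle h,\rho(x^*y)k\rangle$) satisfying $w_t(\vartheta_t(b)x\odot h)=\rho(b)w_t(x\odot h)$, $w_0(b\odot h)=\rho(b)h$, $w_{s+t}(\vartheta_t(x_s)y_t\odot h)=w_s(x_s\odot w_t(y_t\odot h))$, and $t\mapsto w_t(x_t\odot h)$ continuous for every strongly continuous section $(x_t)$ and $h\in H$. Define $\eta_t(x)h:=w_t(x\odot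 h)$, and $\vartheta^w_t(a):=w_t(\mathrm{id}\odot a)w_t^*$ for $a\in\rho(\mathcal{B})'$. Let $E':=\{x'\in\mathcal{B}(G,H):\rho(b)x'=x'b\ \forall b\in\mathcal{B}\}$ and let $\xi'\in E'$ with $\xi'^*\xi'=1$. Put $H_t:=\vartheta^w_t(\xi'\xi'^* )H$. The strongly continuous commutant $F'^\odot$: $F'_t:=\vartheta^w_t(\xi'\xi'^* )E'\subset\mathcal{B}(G,H_t)$, a $\mathcal{B}'$-correspondence with right action by operator multiplication, inner product $x'^*y'$, left action $b'.x'=\vartheta^w_t(\xi'b'\xi'^* )x'$, and product $(x'_s,y'_t)\mapsto\vartheta^w_t(x'_s\xi'^* )y'_t\in F'_{s+t}$; its strongly continuous sections are those with $t\mapsto x'_t\in\mathcal{B}(G,H)$ strongly continuous. *)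

theory Defs
  imports "HOL-Analysis.Analysis"
begin

class chilbert = real_normed_vector + complete_space +
  fixes scaleC :: "complex \<Rightarrow> 'a \<Rightarrow> 'a"
    and cinner :: "'a \<Rightarrow> 'a \<Rightarrow> complex"
  assumes scaleC_add_right: "scaleC c (x + y) = scaleC c x + scaleC c y"
    and scaleC_add_left: "scaleC (c + d) x = scaleC c x + scaleC d x"
    and scaleC_scaleC: "scaleC c (scaleC d x) = scaleC (c * d) x"
    and scaleC_one: "scaleC 1 x = x"
    and scaleR_scaleC: "scaleR r x = scaleC (complex_of_real r) x"
    and cinner_commute: "cinner x y = cnj (cinner y x)"
    and cinner_add_right: "cinner x (y + z) = cinner x y + cinner x z"
    and cinner_scaleC_right: "cinner x (scaleC c y) = c * cinner x y"
    and norm_cinner: "complex_of_real ((norm x)\<^sup>2) = cinner x x"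

definition clinear :: "('a::chilbert \<Rightarrow> 'b::chilbert) \<Rightarrow> bool" where
  "clinear f \<longleftrightarrow> (\<forall>x y. f (x + y) = f x + f y) \<and> (\<forall>c x. f (scaleC c x) = scaleC c (f x))"

definition bop :: "('a::chilbert \<Rightarrow> 'b::chilbert) \<Rightarrow> bool" where
  "bop f \<longleftrightarrow> clinear f \<and> (\<exists>K. \<forall>x. norm (f x) \<le> K * norm x)"

definition adj :: "('a::chilbert \<Rightarrow> 'b::chilbert) \<Rightarrow> ('b \<Rightarrow> 'a)" where
  "adj f = (THE g. \<forall>x y. cinner (f x) y = cinner x (g y))"

definition op_add :: "('a::chilbert \<Rightarrow> 'b::chilbert) \<Rightarrow> ('a \<Rightarrow> 'b) \<Rightarrow> ('a \<Rightarrow> 'b)" where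
  "op_add a b = (\<lambda>x. a x + b x)"

definition op_scale :: "complex \<Rightarrow> ('a::chilbert \<Rightarrow> 'b::chilbert) \<Rightarrow> ('a \<Rightarrow> 'b)" where
  "op_scale c a = (\<lambda>x. scaleC c (a x))"

definition selfadj :: "('a::chilbert \<Rightarrow> 'a) \<Rightarrow> bool" where
  "selfadj a \<longleftrightarrow> bop a \<and> adj a = a"

definition op_le :: "('a::chilbert \<Rightarrow> 'a) \<Rightarrow> ('a \<Rightarrow> 'a) \<Rightarrow> bool" where
  "op_le a b \<longleftrightarrow> (\<forall>x. Re (cinner x (a x)) \<le> Re (cinner x (b x)))"

definition is_op_sup :: "('a::chilbert \<Rightarrow> 'a) \<Rightarrow> ('a \<Rightarrow> 'a) set \<Rightarrow> bool" where
  "is_op_sup s D \<longleftrightarrow> selfadj s \<and> (\<forall>a\<in>D. op_le a s)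
     \<and> (\<forall>u. selfadj u \<and> (\<forall>a\<in>D. op_le a u) \<longrightarrow> op_le s u)"

definition commutant :: "('a::chilbert \<Rightarrow> 'a) set \<Rightarrow> ('a \<Rightarrow> 'a) set" where
  "commutant S = {a. bop a \<and> (\<forall>b\<in>S. a \<circ> b = b \<circ> a)}"

definition von_neumann_algebra :: "('a::chilbert \<Rightarrow> 'a) set \<Rightarrow> bool" where
  "von_neumann_algebra A \<longleftrightarrow> (\<forall>a\<in>A. bop a) \<and> (\<forall>a\<in>A. adj a \<in> A)
     \<and> commutant (commutant A) = A"

definition star_hom :: "('a::chilbert \<Rightarrow> 'a) set \<Rightarrow> (('a \<Rightarrow> 'a) \<Rightarrow> ('b::chilbert \<Rightarrow> 'b)) \<Rightarrow> bool" where
  "star_hom A \<Phi> \<longleftrightarrow> (\<forall>a\<in>A. bop (\<Phi> a))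
     \<and> (\<forall>a\<in>A. \<forall>b\<in>A. \<Phi> (op_add a b) = op_add (\<Phi> a) (\<Phi> b))
     \<and> (\<forall>c. \<forall>a\<in>A. \<Phi> (op_scale c a) = op_scale c (\<Phi> a))
     \<and> (\<forall>a\<in>A. \<forall>b\<in>A. \<Phi> (a \<circ> b) = \<Phi> a \<circ> \<Phi> b)
     \<and> (\<forall>a\<in>A. \<Phi> (adj a) = adj (\<Phi> a))"

text \<open>normal: preserves least upper bounds of bounded increasing nets (as directed sets)
of self-adjoint elements\<close>
definition normal_on :: "('a::chilbert \<Rightarrow> 'a) set \<Rightarrow> (('a \<Rightarrow> 'a) \<Rightarrow> ('b::chilbert \<Rightarrow> 'b)) \<Rightarrow> bool" where
  "normal_on A \<Phi> \<longleftrightarrow> (\<forall>D s. D \<subseteq> A \<and> D \<noteq> {} \<and> (\<forall>a\<in>D. selfadj a)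
       \<and> (\<forall>a\<in>D. \<forall>b\<in>D. \<exists>c\<in>D. op_le a c \<and> op_le b c)
       \<and> s \<in> A \<and> is_op_sup s D \<longrightarrow> is_op_sup (\<Phi> s) (\<Phi> ` D))"

definition cspanC :: "'a::chilbert set \<Rightarrow> 'a set" where
  "cspanC S = {(\<Sum>i\<in>I. scaleC (c i) (v i)) | (I :: nat set) c v. finite I \<and> v ` I \<subseteq> S}"

definition unitary_onto :: "('a::chilbert \<Rightarrow> 'b::chilbert) \<Rightarrow> 'b set \<Rightarrow> bool" where
  "unitary_onto U S \<longleftrightarrow> bop U \<and> adj U \<circ> U = id \<and> range U = S"

definition E0_semigroup :: "('g::chilbert \<Rightarrow> 'g) set \<Rightarrow> (real \<Rightarrow> ('g \<Rightarrow> 'g) \<Rightarrow> ('g \<Rightarrow> 'g)) \<Rightarrow> bool" where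
  "E0_semigroup B \<theta> \<longleftrightarrow>
     (\<forall>t\<ge>0. \<theta> t ` B \<subseteq> B \<and> star_hom B (\<theta> t) \<and> \<theta> t id = id \<and> normal_on B (\<theta> t))
     \<and> (\<forall>b\<in>B. \<theta> 0 b = b)
     \<and> (\<forall>s\<ge>0. \<forall>t\<ge>0. \<forall>b\<in>B. \<theta> (s + t) b = \<theta> s (\<theta> t b))"

definition faithful_semigroup :: "('g::chilbert \<Rightarrow> 'g) set \<Rightarrow> (real \<Rightarrow> ('g \<Rightarrow> 'g) \<Rightarrow> ('g \<Rightarrow> 'g)) \<Rightarrow> bool" where
  "faithful_semigroup B \<theta> \<longleftrightarrow> (\<forall>t\<ge>0. inj_on (\<theta> t) B)"

definition strongly_continuous_semigroup :: "('g::chilbert \<Rightarrow> 'g) set \<Rightarrow> (real \<Rightarrow> ('g \<Rightarrow> 'g) \<Rightarrow> ('g \<Rightarrow> 'g)) \<Rightarrow> bool" where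
  "strongly_continuous_semigroup B \<theta> \<longleftrightarrow> (\<forall>b\<in>B. \<forall>g. continuous_on {0..} (\<lambda>t. \<theta> t b g))"

text \<open>strongly continuous sections of the product system E (E_t = B)\<close>
definition sc_section :: "('g::chilbert \<Rightarrow> 'g) set \<Rightarrow> (real \<Rightarrow> ('g \<Rightarrow> 'g)) \<Rightarrow> bool" where
  "sc_section B x \<longleftrightarrow> (\<forall>t\<ge>0. x t \<in> B) \<and> (\<forall>g. continuous_on {0..} (\<lambda>t. x t g))"

definition intertwiners :: "('g::chilbert \<Rightarrow> 'g) set \<Rightarrow> (real \<Rightarrow> ('g \<Rightarrow> 'g) \<Rightarrow> ('g \<Rightarrow> 'g)) \<Rightarrow> real \<Rightarrow> ('g \<Rightarrow> 'g) set" where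
  "intertwiners B \<theta> t = {x'. bop x' \<and> (\<forall>b\<in>B. \<theta> t b \<circ> x' = x' \<circ> b)}"

text \<open>A strongly continuous right dilation (H, rho, w) of the product system of theta,
described through eta_t(x)h = w_t(x \<odot> h): w_t is a unitary E_t \<odot> H \<rightarrow> H iff
eta_t preserves the inner product of elementary tensors and the elementary tensors'
images span a dense subspace.\<close>
definition right_dilation ::
  "('g::chilbert \<Rightarrow> 'g) set \<Rightarrow> (real \<Rightarrow> ('g \<Rightarrow> 'g) \<Rightarrow> ('g \<Rightarrow> 'g))
   \<Rightarrow> (('g \<Rightarrow> 'g) \<Rightarrow> ('h::chilbert \<Rightarrow> 'h)) \<Rightarrow> (real \<Rightarrow> ('g \<Rightarrow> 'g) \<Rightarrow> ('h \<Rightarrow> 'h)) \<Rightarrow> bool" where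
  "right_dilation B \<theta> \<rho> \<eta> \<longleftrightarrow>
     star_hom B \<rho> \<and> \<rho> id = id \<and> inj_on \<rho> B \<and> normal_on B \<rho>
   \<and> (\<forall>t\<ge>0. \<forall>x\<in>B. \<forall>y\<in>B. \<forall>h k. cinner (\<eta> t x h) (\<eta> t y k) = cinner h (\<rho> (adj x \<circ> y) k))
   \<and> (\<forall>t\<ge>0. closure (cspanC {\<eta> t x h | x h. x \<in> B}) = UNIV)
   \<and> (\<forall>t\<ge>0. \<forall>b\<in>B. \<forall>x\<in>B. \<forall>h. \<eta> t (\<theta> t b \<circ> x) h = \<rho> b (\<eta> t x h))
   \<and> (\<forall>b\<in>B. \<forall>h. \<eta> 0 b h = \<rho> b h)
   \<and> (\<forall>s\<ge>0. \<forall>t\<ge>0. \<forall>x\<in>B. \<forall>y\<in>B. \<forall>h. \<eta> (s + t) (\<theta> t x \<circ> y) h = \<eta> s x (\<eta> t y h))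
   \<and> (\<forall>x. sc_section B x \<longrightarrow> (\<forall>h. continuous_on {0..} (\<lambda>t. \<eta> t (x t) h)))"

text \<open>theta^w_t(a) = w_t (id \<odot> a) w_t^*, for a in rho(B)': the bounded operator
with theta^w_t(a) (eta_t(x) h) = eta_t(x) (a h).\<close>
definition thetaw :: "('g::chilbert \<Rightarrow> 'g) set \<Rightarrow> (real \<Rightarrow> ('g \<Rightarrow> 'g) \<Rightarrow> ('h::chilbert \<Rightarrow> 'h))
   \<Rightarrow> real \<Rightarrow> ('h \<Rightarrow> 'h) \<Rightarrow> ('h \<Rightarrow> 'h)" where
  "thetaw B \<eta> t a = (THE c. bop c \<and> (\<forall>x\<in>B. \<forall>h. c (\<eta> t x h) = \<eta> t x (a h)))"

definition Eprime :: "('g::chilbert \<Rightarrow> 'g) set \<Rightarrow> (('g \<Rightarrow> 'g) \<Rightarrow> ('h::chilbert \<Rightarrow> 'h)) \<Rightarrow> ('g \<Rightarrow> 'h) set" where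
  "Eprime B \<rho> = {x'. bop x' \<and> (\<forall>b\<in>B. \<rho> b \<circ> x' = x' \<circ> b)}"

definition Fprime :: "('g::chilbert \<Rightarrow> 'g) set \<Rightarrow> (('g \<Rightarrow> 'g) \<Rightarrow> ('h::chilbert \<Rightarrow> 'h))
   \<Rightarrow> (real \<Rightarrow> ('g \<Rightarrow> 'g) \<Rightarrow> ('h \<Rightarrow> 'h)) \<Rightarrow> ('g \<Rightarrow> 'h) \<Rightarrow> real \<Rightarrow> ('g \<Rightarrow> 'h) set" where
  "Fprime B \<rho> \<eta> \<xi> t = {thetaw B \<eta> t (\<xi> \<circ> adj \<xi>) \<circ> x' | x'. x' \<in> Eprime B \<rho>}"

definition Hsub :: "('g::chilbert \<Rightarrow> 'g) set \<Rightarrow> (real \<Rightarrow> ('g \<Rightarrow> 'g) \<Rightarrow> ('h::chilbert \<Rightarrow> 'h))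
   \<Rightarrow> ('g \<Rightarrow> 'h) \<Rightarrow> real \<Rightarrow> 'h set" where
  "Hsub B \<eta> \<xi> t = range (thetaw B \<eta> t (\<xi> \<circ> adj \<xi>))"

end

theory Submission
  imports Defs
begin

text \<open>Since the identity lies in \<open>B\<close>, the relation \<open>\<Upsilon>\<^sub>t (x g) = \<eta>\<^sub>t(x) \<xi>' g\<close> forces
\<open>\<Upsilon>\<^sub>t g = \<eta>\<^sub>t(1) \<xi>' g\<close>. This map is isometric because \<open>\<eta>\<^sub>t\<close> is isometric on elementary
tensors and \<open>\<xi>'\<^sup>* \<xi>' = 1\<close>; it also satisfies \<open>\<eta>\<^sub>t(1) \<rho>(x) = \<eta>\<^sub>t(x)\<close> and
\<open>\<Upsilon>\<^sub>t\<^sup>* \<eta>\<^sub>t(x) h = x \<xi>'\<^sup>* h\<close>. Hence conjugation by \<open>\<Upsilon>\<^sub>t\<close> turns \<open>\<vartheta>\<^sup>w\<^sub>t(\<xi>' b' \<xi>'\<^sup>*)\<close>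
into \<open>\<Upsilon>\<^sub>t b' \<Upsilon>\<^sub>t\<^sup>*\<close> for \<open>b'\<close> in \<open>B'\<close>; for \<open>b' = 1\<close> this identifies \<open>H\<^sub>t\<close> with the range of
\<open>\<Upsilon>\<^sub>t\<close>. As \<open>\<Upsilon>\<^sub>t\<close> intertwines \<open>\<vartheta>\<^sub>t(b)\<close> with \<open>\<rho>(b)\<close>, composition with \<open>\<Upsilon>\<^sub>t\<close> maps
\<open>E'\<^sub>t\<close> onto \<open>F'\<^sub>t\<close>, and the product law \<open>\<eta>\<^sub>t(x) \<eta>\<^sub>s(1) = \<eta>\<^sub>s\<^sub>+\<^sub>t(\<vartheta>\<^sub>s(x))\<close> of the
dilation gives \<open>\<vartheta>\<^sup>w\<^sub>t(\<Upsilon>\<^sub>s x' \<xi>'\<^sup>*) = \<Upsilon>\<^sub>s\<^sub>+\<^sub>t x' \<Upsilon>\<^sub>t\<^sup>*\<close>, which is the product formula.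
Adjoints of bounded operators exist by the Riesz representation theorem, obtained from the
point of minimal norm on the hyperplane \<open>\<phi> = 1\<close>.\<close>

section \<open>Inner products\<close>

lemma cinner_add_left: "cinner (x + y) (z::'a::chilbert) = cinner x z + cinner y z"
  by (metis cinner_commute cinner_add_right complex_cnj_add)

lemma cinner_scaleC_left: "cinner (scaleC c x) (y::'a::chilbert) = cnj c * cinner x y"
  by (metis cinner_commute cinner_scaleC_right complex_cnj_mult complex_cnj_cnj)

lemma cinner_zero_right [simp]: "cinner (x::'a::chilbert) 0 = 0"
  using cinner_add_right[of x 0 0] by simp

lemma cinner_zero_left [simp]: "cinner 0 (x::'a::chilbert) = 0"
  using cinner_add_left[of 0 0 x] by simp

lemma scaleC_of_real: "scaleC (complex_of_real r) (x::'a::chilbert) = scaleR r x"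
  by (simp add: scaleR_scaleC)

lemma scaleC_minus_one: "scaleC (-1) (x::'a::chilbert) = - x"
  using scaleR_scaleC[of "-1" x] by simp

lemma cinner_diff_right: "cinner (x::'a::chilbert) (y - z) = cinner x y - cinner x z"
  by (metis diff_conv_add_uminus cinner_add_right cinner_scaleC_right scaleC_minus_one
      mult_minus1)

lemma cinner_diff_left: "cinner (x - y) (z::'a::chilbert) = cinner x z - cinner y z"
  by (metis cinner_commute cinner_diff_right complex_cnj_diff)

lemma cinner_self: "cinner (x::'a::chilbert) x = complex_of_real ((norm x)\<^sup>2)"
  by (rule norm_cinner[symmetric])

lemma cinner_self_eq_zero [simp]: "cinner (x::'a::chilbert) x = 0 \<longleftrightarrow> x = 0"
  by (simp add: cinner_self)

lemma cinner_ext: "(\<And>z. cinner z x = cinner z (y::'a::chilbert)) \<Longrightarrow> x = y"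
  by (metis cinner_diff_right cinner_self_eq_zero diff_self eq_iff_diff_eq_0)

lemma norm_add_scaleC_power2:
  "(norm (x + scaleC c (y::'a::chilbert)))\<^sup>2
     = (norm x)\<^sup>2 + 2 * Re (c * cinner x y) + (cmod c)\<^sup>2 * (norm y)\<^sup>2"
proof -
  have cross: "cnj c * cinner y x = cnj (c * cinner x y)"
    by (metis cinner_commute complex_cnj_mult)
  have "complex_of_real ((norm (x + scaleC c y))\<^sup>2)
      = cinner x x + c * cinner x y + cnj c * cinner y x + cnj c * c * cinner y y"
    unfolding norm_cinner by (simp add: cinner_add_left cinner_add_right cinner_scaleC_left
        cinner_scaleC_right algebra_simps)
  also have "\<dots> = cinner x x + (c * cinner x y + cnj (c * cinner x y)) + c * cnj c * cinner y y"
    by (simp add: cross algebra_simps)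
  also have "\<dots> = complex_of_real ((norm x)\<^sup>2 + 2 * Re (c * cinner x y) + (cmod c)\<^sup>2 * (norm y)\<^sup>2)"
    by (simp only: complex_add_cnj complex_norm_square[symmetric] cinner_self of_real_add
        of_real_mult)
  finally show ?thesis using of_real_eq_iff by blast
qed

lemma norm_scaleC: "norm (scaleC c (x::'a::chilbert)) = cmod c * norm x"
  using norm_add_scaleC_power2[of 0 c x] by (simp add: power_mult_distrib[symmetric]
      power2_eq_iff_nonneg)

lemma parallelogram_law:
  "(norm (x + y))\<^sup>2 + (norm (x - y))\<^sup>2 = 2 * (norm (x::'a::chilbert))\<^sup>2 + 2 * (norm y)\<^sup>2"
  using norm_add_scaleC_power2[of x 1 y] norm_add_scaleC_power2[of x "-1" y]
  by (simp add: scaleC_one scaleC_minus_one)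

lemma Re_cinner_le_norm: "Re (cinner (x::'a::chilbert) y) \<le> norm x * norm y"
proof (cases "x = 0 \<or> y = 0")
  case True
  then show ?thesis by auto
next
  case False
  define a where "a = norm y"
  define b where "b = norm x"
  have ab: "0 < a" "0 < b" using False by (auto simp: a_def b_def)
  have "0 \<le> (norm (scaleR a x + scaleC (- complex_of_real b) y))\<^sup>2"
    by simp
  also have "\<dots> = (norm (scaleR a x))\<^sup>2 + 2 * Re (- complex_of_real b * cinner (scaleR a x) y)
      + (cmod (- complex_of_real b))\<^sup>2 * (norm y)\<^sup>2"
    by (rule norm_add_scaleC_power2)
  also have "\<dots> = 2 * (a * b) * (a * b) - 2 * (a * b) * Re (cinner x y)"
    using ab by (simp add: scaleC_of_real[symmetric] cinner_scaleC_left norm_scaleC a_def b_def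
        power2_eq_square algebra_simps)
  finally have "2 * (a * b) * Re (cinner x y) \<le> 2 * (a * b) * (a * b)" by simp
  then have "Re (cinner x y) \<le> a * b" using ab by simp
  then show ?thesis by (simp add: a_def b_def mult.commute)
qed

lemma norm_cinner_le: "cmod (cinner (x::'a::chilbert) y) \<le> norm x * norm y"
proof -
  define w where "w = cinner x y"
  have "cinner x (scaleC (cnj w) y) = complex_of_real ((cmod w)\<^sup>2)"
    using complex_norm_square[of w] by (simp add: cinner_scaleC_right w_def mult.commute)
  then have "(cmod w)\<^sup>2 \<le> norm x * norm (scaleC (cnj w) y)"
    using Re_cinner_le_norm[of x "scaleC (cnj w) y"] by simp
  then have "cmod w * cmod w \<le> cmod w * (norm x * norm y)"
    by (simp add: norm_scaleC power2_eq_square algebra_simps)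
  then show ?thesis unfolding w_def[symmetric]
    by (cases "cmod w = 0") (simp_all add: mult_le_cancel_left)
qed

section \<open>Riesz representation\<close>

lemma norm_diff_power2_le_near_minimum:
  fixes x y :: "'a::chilbert"
  assumes x: "norm x \<le> d + e" and y: "norm y \<le> d + e" and xy: "2 * d \<le> norm (x + y)"
    and "0 \<le> d" "0 \<le> e"
  shows "(norm (x - y))\<^sup>2 \<le> 4 * e * (2 * d + e)"
proof -
  have "(norm x)\<^sup>2 \<le> (d + e)\<^sup>2" "(norm y)\<^sup>2 \<le> (d + e)\<^sup>2"
    using x y by (auto intro!: power_mono)
  moreover have "(2 * d)\<^sup>2 \<le> (norm (x + y))\<^sup>2"
    by (rule power_mono[OF xy]) (use assms(4) in simp)
  ultimately show ?thesis
    using parallelogram_law[of x y] by (simp add: power2_eq_square algebra_simps)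
qed

lemma closed_midpoint_convex_has_min_norm:
  fixes A :: "'a::chilbert set"
  assumes closed: "closed A" and a: "a \<in> A"
    and mid: "\<And>x y. x \<in> A \<Longrightarrow> y \<in> A \<Longrightarrow> scaleR (1/2) (x + y) \<in> A"
  shows "\<exists>z\<in>A. \<forall>x\<in>A. norm z \<le> norm x"
proof -
  define d where "d = Inf (norm ` A)"
  have bdd: "bdd_below (norm ` A)" by (rule bdd_belowI[of _ 0]) auto
  have d_le: "d \<le> norm x" if "x \<in> A" for x
    unfolding d_def using bdd that by (auto intro: cInf_lower)
  have d0: "0 \<le> d" unfolding d_def using a by (auto intro: cInf_greatest)
  have "\<forall>n. \<exists>x. x \<in> A \<and> norm x < d + inverse (real (Suc n))"
  proof
    fix n
    have "Inf (norm ` A) < d + inverse (real (Suc n))" unfolding d_def by simp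
    then show "\<exists>x. x \<in> A \<and> norm x < d + inverse (real (Suc n))"
      using cInf_lessD[of "norm ` A"] a by blast
  qed
  then obtain X where XA: "\<And>n. X n \<in> A"
    and Xn: "\<And>n. norm (X n) < d + inverse (real (Suc n))"
    by metis
  have "Cauchy X"
  proof (rule CauchyI)
    fix \<epsilon> :: real assume "0 < \<epsilon>"
    then obtain N where N: "inverse (real (Suc N)) < \<epsilon>\<^sup>2 / (8 * d + 4)"
      using d0 reals_Archimedean[of "\<epsilon>\<^sup>2 / (8 * d + 4)"] by auto
    define e where "e = inverse (real (Suc N))"
    have e: "0 \<le> e" "e \<le> 1" by (simp_all add: e_def field_simps)
    have "norm (X m) \<le> d + e" if "N \<le> m" for m
    proof -
      have "inverse (real (Suc m)) \<le> e"
        unfolding e_def using that by (intro le_imp_inverse_le) auto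
      then show ?thesis using Xn[of m] by linarith
    qed
    moreover have "2 * d \<le> norm (X m + X n)" for m n
      using d_le[OF mid[OF XA XA, of m n]] by simp
    ultimately have "(norm (X m - X n))\<^sup>2 \<le> 4 * e * (2 * d + e)" if "N \<le> m" "N \<le> n" for m n
      using that d0 e by (intro norm_diff_power2_le_near_minimum) auto
    moreover have "4 * e * (2 * d + e) < \<epsilon>\<^sup>2"
    proof -
      have "4 * e * (2 * d + e) \<le> (8 * d + 4) * e" using d0 e by (simp add: algebra_simps
          mult_left_mono)
      also have "\<dots> < \<epsilon>\<^sup>2" using N d0 by (simp add: e_def field_simps)
      finally show ?thesis .
    qed
    ultimately show "\<exists>M. \<forall>m\<ge>M. \<forall>n\<ge>M. norm (X m - X n) < \<epsilon>"
      using \<open>0 < \<epsilon>\<close> by (metis order.strict_trans1 power_less_imp_less_base order_less_imp_le)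
  qed
  then obtain z where lim: "X \<longlonglongrightarrow> z" using Cauchy_convergent_iff convergent_def by blast
  have "z \<in> A" using closed XA lim closed_sequentially by blast
  moreover have "norm z \<le> d"
  proof (rule LIMSEQ_le)
    show "(\<lambda>n. norm (X n)) \<longlonglongrightarrow> norm z" using lim by (rule tendsto_norm)
    show "(\<lambda>n. d + inverse (real (Suc n))) \<longlonglongrightarrow> d"
      using tendsto_add[OF tendsto_const LIMSEQ_inverse_real_of_nat, of d] by simp
    show "\<exists>N. \<forall>n\<ge>N. norm (X n) \<le> d + inverse (real (Suc n))" using Xn less_imp_le by blast
  qed
  ultimately show ?thesis using d_le by force
qed

lemma cinner_eq_zero_if_norm_minimal:
  fixes z v :: "'a::chilbert"
  assumes min: "\<And>c. norm z \<le> norm (z + scaleC c v)"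
  shows "cinner z v = 0"
proof -
  define a where "a = cinner z v"
  \<comment> \<open>perturb \<open>z\<close> by \<open>-r a\<^sup>* v\<close> with \<open>r\<close> small enough that the quadratic term loses\<close>
  define r where "r = inverse ((norm v)\<^sup>2 + 1)"
  have r: "0 < r" "r * (norm v)\<^sup>2 < 1"
    unfolding r_def by (simp_all add: add_pos_nonneg field_simps)
  have "cnj a * a = complex_of_real ((cmod a)\<^sup>2)"
    by (metis complex_norm_square mult.commute)
  then have ca: "- complex_of_real r * cnj a * a = - complex_of_real (r * (cmod a)\<^sup>2)"
    by (simp only: mult.assoc of_real_mult mult_minus_left)
  have "(norm z)\<^sup>2 \<le> (norm (z + scaleC (- complex_of_real r * cnj a) v))\<^sup>2"
    using min by (simp add: power_mono)
  also have "\<dots> = (norm z)\<^sup>2 + 2 * Re (- complex_of_real r * cnj a * a)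
      + (cmod (- complex_of_real r * cnj a))\<^sup>2 * (norm v)\<^sup>2"
    unfolding a_def by (rule norm_add_scaleC_power2)
  also have "\<dots> = (norm z)\<^sup>2 - 2 * r * (cmod a)\<^sup>2 + r\<^sup>2 * (cmod a)\<^sup>2 * (norm v)\<^sup>2"
    unfolding ca using r by (simp add: norm_mult power_mult_distrib)
  finally have "r * (cmod a)\<^sup>2 * (2 - r * (norm v)\<^sup>2) \<le> 0"
    by (simp add: power2_eq_square algebra_simps)
  moreover have "0 < 2 - r * (norm v)\<^sup>2" using r by simp
  ultimately have "(cmod a)\<^sup>2 \<le> 0" using r
    by (metis mult_pos_pos not_le zero_less_power2 mult_le_0_iff power2_eq_square)
  then show ?thesis unfolding a_def by simp
qed

lemma riesz_representation:
  fixes \<phi> :: "'a::chilbert \<Rightarrow> complex"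
  assumes add: "\<And>x y. \<phi> (x + y) = \<phi> x + \<phi> y"
    and scale: "\<And>c x. \<phi> (scaleC c x) = c * \<phi> x"
    and bound: "\<And>x. cmod (\<phi> x) \<le> K * norm x"
  shows "\<exists>z. \<forall>x. \<phi> x = cinner z x"
proof (cases "\<forall>x. \<phi> x = 0")
  case True
  then show ?thesis by (intro exI[of _ 0]) simp
next
  case False
  then obtain x0 where x0: "\<phi> x0 \<noteq> 0" by auto
  have phi_scaleR: "\<phi> (scaleR r x) = complex_of_real r * \<phi> x" for r x
    by (simp add: scaleC_of_real[symmetric] scale)
  have "bounded_linear \<phi>"
  proof (rule bounded_linear_intro[where K=K])
    show "\<phi> (scaleR r x) = scaleR r (\<phi> x)" for r x by (simp add: phi_scaleR scaleR_conv_of_real)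
    show "norm (\<phi> x) \<le> norm x * K" for x using bound by (simp add: mult.commute)
  qed (rule add)
  define A where "A = {x. \<phi> x = 1}"
  have "closed A"
    unfolding A_def using \<open>bounded_linear \<phi>\<close>
    by (intro closed_Collect_eq continuous_on_const) (rule linear_continuous_on)
  moreover have "scaleC (1 / \<phi> x0) x0 \<in> A" using x0 by (simp add: A_def scale)
  moreover have "scaleR (1/2) (x + y) \<in> A" if "x \<in> A" "y \<in> A" for x y
    using that by (simp add: A_def phi_scaleR add)
  ultimately obtain z where "z \<in> A" and "\<forall>x\<in>A. norm z \<le> norm x"
    by (metis closed_midpoint_convex_has_min_norm)
  then have z: "\<phi> z = 1" and z_min: "\<And>x. \<phi> x = 1 \<Longrightarrow> norm z \<le> norm x"
    by (simp_all add: A_def)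
  have orth: "cinner z v = 0" if "\<phi> v = 0" for v
    using that z by (intro cinner_eq_zero_if_norm_minimal z_min) (simp add: add scale)
  have "z \<noteq> 0" using z add[of 0 0] by auto
  show ?thesis
  proof (intro exI allI)
    fix x
    have "\<phi> (x - scaleC (\<phi> x) z) = 0"
      using z add[of "x - scaleC (\<phi> x) z" "scaleC (\<phi> x) z"] by (simp add: scale)
    then have "cinner z (x - scaleC (\<phi> x) z) = 0" by (rule orth)
    then have "cinner z x = \<phi> x * cinner z z"
      by (simp add: cinner_diff_right cinner_scaleC_right)
    then show "\<phi> x = cinner (scaleC (inverse (cnj (cinner z z))) z) x"
      using \<open>z \<noteq> 0\<close> by (simp add: cinner_scaleC_left)
  qed
qed

section \<open>Bounded operators and adjoints\<close>

lemma bop_bounded_linear: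
  assumes "bop f"
  shows "bounded_linear f"
proof -
  obtain K where "clinear f" and K: "\<And>x. norm (f x) \<le> K * norm x"
    using assms unfolding bop_def by auto
  then show ?thesis
    unfolding clinear_def
    by (intro bounded_linear_intro[where K=K]) (simp_all add: scaleC_of_real[symmetric] mult.commute)
qed

lemma bop_add: "bop f \<Longrightarrow> f (x + y) = f x + f y"
  unfolding bop_def clinear_def by auto

lemma bop_scaleC: "bop f \<Longrightarrow> f (scaleC c x) = scaleC c (f x)"
  unfolding bop_def clinear_def by auto

lemma bop_sum: "bop f \<Longrightarrow> f (\<Sum>i\<in>I. v i) = (\<Sum>i\<in>I. f (v i))"
  by (rule additive.sum) (unfold_locales, rule bop_add)

lemma bop_bound_nonneg:
  assumes "bop f"
  obtains K where "K \<ge> 0" "\<And>x. norm (f x) \<le> K * norm x"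
proof -
  obtain K where "\<And>x. norm (f x) \<le> K * norm x" using assms unfolding bop_def by auto
  then have "norm (f x) \<le> max K 0 * norm x" for x
    by (meson max.cobounded1 mult_right_mono norm_ge_zero order.trans)
  then show ?thesis using that[of "max K 0"] by simp
qed

lemma bop_id: "bop id"
  unfolding bop_def clinear_def by (auto intro: exI[of _ 1])

lemma bop_comp:
  assumes f: "bop f" and g: "bop g"
  shows "bop (f \<circ> g)"
proof -
  obtain Kf Kg where "Kf \<ge> 0" "\<And>x. norm (f x) \<le> Kf * norm x" "\<And>x. norm (g x) \<le> Kg * norm x"
    using bop_bound_nonneg[OF f] bop_bound_nonneg[OF g] by metis
  then have "norm (f (g x)) \<le> (Kf * Kg) * norm x" for x
    by (metis mult.assoc mult_left_mono order.trans)
  moreover have "clinear (f \<circ> g)" using f g unfolding bop_def clinear_def by simp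
  ultimately show ?thesis unfolding bop_def by auto
qed

lemma adj_eqI:
  assumes "\<And>x y. cinner (f x) y = cinner x (g y)"
  shows "adj f = g"
  unfolding adj_def
proof (rule the_equality)
  fix h assume h: "\<forall>x y. cinner (f x) y = cinner x (h y)"
  show "h = g"
    by (rule ext, rule cinner_ext) (metis h assms)
qed (use assms in auto)

lemma adjoint_exists:
  assumes f: "bop f"
  shows "\<exists>g. \<forall>x y. cinner (f x) y = cinner x (g y)"
proof -
  obtain K where K: "\<And>x. norm (f x) \<le> K * norm x" using f unfolding bop_def by auto
  have "\<exists>z. \<forall>x. cinner y (f x) = cinner z x" for y
  proof (rule riesz_representation[where K="norm y * K"])
    show "cmod (cinner y (f x)) \<le> norm y * K * norm x" for x
      using norm_cinner_le[of y "f x"] K[of x]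
      by (metis mult.assoc mult_left_mono norm_ge_zero order.trans)
  qed (simp_all add: bop_add[OF f] bop_scaleC[OF f] cinner_add_right cinner_scaleC_right)
  then obtain g where "\<And>x y. cinner y (f x) = cinner (g y) x" by metis
  then show ?thesis by (metis cinner_commute)
qed

lemma cinner_adj_right: "bop f \<Longrightarrow> cinner (f x) y = cinner x (adj f y)"
  by (metis adjoint_exists adj_eqI)

lemma cinner_adj_left: "bop f \<Longrightarrow> cinner y (f x) = cinner (adj f y) x"
  by (metis cinner_adj_right cinner_commute)

lemma bop_adj:
  assumes f: "bop f"
  shows "bop (adj f)"
proof -
  obtain K where K0: "K \<ge> 0" and K: "\<And>x. norm (f x) \<le> K * norm x"
    using bop_bound_nonneg[OF f] by metis
  have "clinear (adj f)" unfolding clinear_def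
    by (intro conjI allI; rule cinner_ext)
      (simp_all add: cinner_adj_right[OF f, symmetric] cinner_add_right cinner_scaleC_right)
  moreover have "norm (adj f y) \<le> K * norm y" for y
  proof -
    have "(norm (adj f y))\<^sup>2 = Re (cinner (f (adj f y)) y)"
      by (simp add: cinner_adj_right[OF f] cinner_self)
    also have "\<dots> \<le> norm (f (adj f y)) * norm y" by (rule Re_cinner_le_norm)
    also have "\<dots> \<le> (K * norm (adj f y)) * norm y"
      using K by (simp add: mult_right_mono)
    finally show ?thesis
      using K0 by (cases "adj f y = 0") (simp_all add: power2_eq_square mult_ac)
  qed
  ultimately show ?thesis unfolding bop_def by blast
qed

lemma adj_comp: "bop f \<Longrightarrow> bop g \<Longrightarrow> adj (f \<circ> g) = adj g \<circ> adj f"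
  by (rule adj_eqI) (simp add: cinner_adj_right)

lemma adj_id: "adj id = id"
  by (rule adj_eqI) simp

lemma bop_eq_on_dense_cspanC:
  assumes f: "bop f" and g: "bop g" and dense: "closure (cspanC S) = UNIV"
    and agree: "\<And>v. v \<in> S \<Longrightarrow> f v = g v"
  shows "f = g"
proof -
  have "cspanC S \<subseteq> {x. f x = g x}"
  proof
    fix w assume "w \<in> cspanC S"
    then obtain I :: "nat set" and c v where "v ` I \<subseteq> S" and w: "w = (\<Sum>i\<in>I. scaleC (c i) (v i))"
      unfolding cspanC_def by blast
    then show "w \<in> {x. f x = g x}"
      using agree by (simp add: bop_sum[OF f] bop_sum[OF g] bop_scaleC[OF f] bop_scaleC[OF g] image_subset_iff)
  qed
  moreover have "closed {x. f x = g x}"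
    using f g by (intro closed_Collect_eq) (simp_all add: linear_continuous_on bop_bounded_linear)
  ultimately have "closure (cspanC S) \<subseteq> {x. f x = g x}" by (rule closure_minimal)
  then show ?thesis using dense by auto
qed

lemma bop_if_preserves_cinner:
  fixes f :: "'a::chilbert \<Rightarrow> 'b::chilbert"
  assumes f: "\<And>x y. cinner (f x) (f y) = cinner x y"
  shows "bop f"
proof -
  have add: "f (x + y) = f x + f y" for x y
  proof -
    define d where "d = f (x + y) - f x - f y"
    have "cinner (f u) d = 0" for u
      unfolding d_def by (simp add: cinner_diff_right f cinner_add_right)
    then have "cinner d d = 0"
      by (subst (1) d_def) (simp add: cinner_diff_left)
    then show ?thesis unfolding d_def by (simp add: algebra_simps)
  qed
  have scale: "f (scaleC c x) = scaleC c (f x)" for c x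
  proof -
    define d where "d = f (scaleC c x) - scaleC c (f x)"
    have "cinner (f u) d = 0" for u
      unfolding d_def by (simp add: cinner_diff_right f cinner_scaleC_right)
    then have "cinner d d = 0"
      by (subst (1) d_def) (simp add: cinner_diff_left cinner_scaleC_left)
    then show ?thesis unfolding d_def by simp
  qed
  have "norm (f x) = norm x" for x
    using f[of x x] unfolding cinner_self of_real_eq_iff by (simp add: power2_eq_iff_nonneg)
  then show ?thesis unfolding bop_def clinear_def using add scale by (metis mult_1 order_refl)
qed

lemma adj_comp_self_if_preserves_cinner:
  assumes f: "\<And>x y. cinner (f x) (f y) = cinner x y"
  shows "adj f \<circ> f = id"
  by (rule ext, rule cinner_ext)
    (simp add: cinner_adj_right[OF bop_if_preserves_cinner[OF f], symmetric] f)

lemma adj_comp_isometry: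
  assumes "bop U" "adj U \<circ> U = id" "bop x"
  shows "adj (U \<circ> x) \<circ> (U \<circ> y) = adj x \<circ> y"
  using assms by (simp add: adj_comp comp_assoc[symmetric]) (simp add: comp_assoc)

lemma comp_op_add: "bop U \<Longrightarrow> U \<circ> op_add x y = op_add (U \<circ> x) (U \<circ> y)"
  unfolding op_add_def by (rule ext) (simp add: bop_add)

lemma comp_op_scale: "bop U \<Longrightarrow> U \<circ> op_scale c x = op_scale c (U \<circ> x)"
  unfolding op_scale_def by (rule ext) (simp add: bop_scaleC)

lemma range_comp_right_inverse:
  assumes "f \<circ> g = id"
  shows "range (g \<circ> f) = range g"
proof -
  have "surj f" using assms by (metis comp_apply id_apply surjI)
  then show ?thesis by (simp only: image_comp[symmetric])
qed

section \<open>The unitaries \<open>\<Upsilon>\<^sub>t\<close>\<close>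

lemma intertwiners_bop: "x' \<in> intertwiners B \<theta> t \<Longrightarrow> bop x'"
  by (simp add: intertwiners_def)

lemma intertwiners_apply: "x' \<in> intertwiners B \<theta> t \<Longrightarrow> b \<in> B \<Longrightarrow> \<theta> t b (x' g) = x' (b g)"
  unfolding intertwiners_def by (blast intro: comp_eq_dest)

lemma Eprime_bop: "x' \<in> Eprime B \<rho> \<Longrightarrow> bop x'"
  by (simp add: Eprime_def)

lemma Eprime_apply: "x' \<in> Eprime B \<rho> \<Longrightarrow> b \<in> B \<Longrightarrow> \<rho> b (x' g) = x' (b g)"
  unfolding Eprime_def by (blast intro: comp_eq_dest)

lemma thetaw_eqI:
  assumes dense: "closure (cspanC {\<eta> t x h | x h. x \<in> B}) = UNIV"
    and c: "bop c" and c_eta: "\<And>x h. x \<in> B \<Longrightarrow> c (\<eta> t x h) = \<eta> t x (a h)"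
  shows "thetaw B \<eta> t a = c"
  unfolding thetaw_def
proof (rule the_equality)
  fix c' assume c': "bop c' \<and> (\<forall>x\<in>B. \<forall>h. c' (\<eta> t x h) = \<eta> t x (a h))"
  show "c' = c"
    by (rule bop_eq_on_dense_cspanC[OF _ c dense]) (use c' c_eta in auto)
qed (use c c_eta in blast)

locale dilation_with_unit_vector =
  fixes B :: "('g::chilbert \<Rightarrow> 'g) set"
    and \<theta> :: "real \<Rightarrow> ('g \<Rightarrow> 'g) \<Rightarrow> ('g \<Rightarrow> 'g)"
    and \<rho> :: "('g \<Rightarrow> 'g) \<Rightarrow> ('h::chilbert \<Rightarrow> 'h)"
    and \<eta> :: "real \<Rightarrow> ('g \<Rightarrow> 'g) \<Rightarrow> ('h \<Rightarrow> 'h)"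
    and \<xi> :: "'g \<Rightarrow> 'h"
  assumes vN: "von_neumann_algebra B"
    and E0: "E0_semigroup B \<theta>"
    and dil: "right_dilation B \<theta> \<rho> \<eta>"
    and xi_in: "\<xi> \<in> Eprime B \<rho>"
    and xi_unit: "adj \<xi> \<circ> \<xi> = id"
begin

lemma bop_mem: "x \<in> B \<Longrightarrow> bop x"
  using vN by (simp add: von_neumann_algebra_def)

lemma adj_mem: "x \<in> B \<Longrightarrow> adj x \<in> B"
  using vN by (simp add: von_neumann_algebra_def)

lemma id_mem: "id \<in> B"
proof -
  have "id \<in> commutant (commutant B)" by (simp add: commutant_def bop_id)
  then show ?thesis using vN by (simp add: von_neumann_algebra_def)
qed

lemma commutant_apply: "b' \<in> commutant B \<Longrightarrow> x \<in> B \<Longrightarrow> b' (x g) = x (b' g)"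
  unfolding commutant_def by (blast intro: comp_eq_dest)

lemma theta_mem: "t \<ge> 0 \<Longrightarrow> b \<in> B \<Longrightarrow> \<theta> t b \<in> B"
  using E0 by (simp add: E0_semigroup_def image_subset_iff)

lemma theta_adj: "t \<ge> 0 \<Longrightarrow> b \<in> B \<Longrightarrow> \<theta> t (adj b) = adj (\<theta> t b)"
  using E0 by (simp add: E0_semigroup_def star_hom_def)

lemma bop_rho: "x \<in> B \<Longrightarrow> bop (\<rho> x)"
  using dil by (simp add: right_dilation_def star_hom_def)

lemma rho_adj: "x \<in> B \<Longrightarrow> \<rho> (adj x) = adj (\<rho> x)"
  using dil by (simp add: right_dilation_def star_hom_def)

lemma rho_comp: "x \<in> B \<Longrightarrow> y \<in> B \<Longrightarrow> \<rho> (x \<circ> y) = \<rho> x \<circ> \<rho> y"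
  using dil by (simp add: right_dilation_def star_hom_def)

lemma rho_id: "\<rho> id = id"
  using dil by (simp add: right_dilation_def)

lemma cinner_eta:
  "t \<ge> 0 \<Longrightarrow> x \<in> B \<Longrightarrow> y \<in> B \<Longrightarrow> cinner (\<eta> t x h) (\<eta> t y k) = cinner h (\<rho> (adj x \<circ> y) k)"
  using dil by (simp add: right_dilation_def)

lemma dense_eta: "t \<ge> 0 \<Longrightarrow> closure (cspanC {\<eta> t x h | x h. x \<in> B}) = UNIV"
  using dil by (simp add: right_dilation_def)

lemma eta_theta_left:
  "t \<ge> 0 \<Longrightarrow> b \<in> B \<Longrightarrow> x \<in> B \<Longrightarrow> \<eta> t (\<theta> t b \<circ> x) h = \<rho> b (\<eta> t x h)"
  using dil by (simp add: right_dilation_def)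

lemma eta_add:
  "s \<ge> 0 \<Longrightarrow> t \<ge> 0 \<Longrightarrow> x \<in> B \<Longrightarrow> y \<in> B \<Longrightarrow>
    \<eta> (s + t) (\<theta> t x \<circ> y) h = \<eta> s x (\<eta> t y h)"
  using dil by (simp add: right_dilation_def)

lemma bop_xi: "bop \<xi>"
  using xi_in by (rule Eprime_bop)

lemma rho_xi: "b \<in> B \<Longrightarrow> \<rho> b (\<xi> g) = \<xi> (b g)"
  using xi_in by (rule Eprime_apply)

lemma adj_xi_xi [simp]: "adj \<xi> (\<xi> g) = g"
  using xi_unit by (metis comp_apply id_apply)

definition Upsilon :: "real \<Rightarrow> 'g \<Rightarrow> 'h" where
  "Upsilon t g = \<eta> t id (\<xi> g)"

lemma eta_id_rho:
  assumes t: "t \<ge> 0" and x: "x \<in> B"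
  shows "\<eta> t id (\<rho> x h) = \<eta> t x h"
proof -
  have "cinner h (\<rho> (adj x) k) = cinner (\<rho> x h) k" for k
    using x by (simp add: rho_adj cinner_adj_right[OF bop_rho[OF x], symmetric])
  then have "cinner (\<eta> t id (\<rho> x h) - \<eta> t x h) (\<eta> t id (\<rho> x h) - \<eta> t x h) = 0"
    using t x id_mem
    by (simp add: cinner_diff_left cinner_diff_right cinner_eta adj_id rho_id rho_comp adj_mem)
  then show ?thesis by simp
qed

lemma Upsilon_apply: "t \<ge> 0 \<Longrightarrow> x \<in> B \<Longrightarrow> Upsilon t (x g) = \<eta> t x (\<xi> g)"
  by (simp add: Upsilon_def rho_xi[symmetric] eta_id_rho)

lemma cinner_Upsilon: "t \<ge> 0 \<Longrightarrow> cinner (Upsilon t g) (Upsilon t g') = cinner g g'"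
  by (simp add: Upsilon_def cinner_eta id_mem adj_id rho_id cinner_adj_right bop_xi)

lemma bop_Upsilon: "t \<ge> 0 \<Longrightarrow> bop (Upsilon t)"
  by (rule bop_if_preserves_cinner) (rule cinner_Upsilon)

lemma adj_Upsilon_Upsilon: "t \<ge> 0 \<Longrightarrow> adj (Upsilon t) \<circ> Upsilon t = id"
  by (rule adj_comp_self_if_preserves_cinner) (rule cinner_Upsilon)

lemma adj_Upsilon_Upsilon_apply [simp]: "t \<ge> 0 \<Longrightarrow> adj (Upsilon t) (Upsilon t g) = g"
  using adj_Upsilon_Upsilon by (metis comp_apply id_apply)

lemma adj_Upsilon_eta:
  assumes t: "t \<ge> 0" and x: "x \<in> B"
  shows "adj (Upsilon t) (\<eta> t x h) = x (adj \<xi> h)"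
proof (rule cinner_ext)
  fix g
  have "cinner g (adj (Upsilon t) (\<eta> t x h)) = cinner (\<xi> g) (\<rho> x h)"
    using t x id_mem
    by (simp add: cinner_adj_right[OF bop_Upsilon, symmetric] Upsilon_def cinner_eta adj_id)
  also have "\<dots> = cinner g (x (adj \<xi> h))"
    using x by (simp add: cinner_adj_left bop_rho rho_adj[symmetric] rho_xi adj_mem
        cinner_adj_right bop_xi bop_mem)
  finally show "cinner g (adj (Upsilon t) (\<eta> t x h)) = cinner g (x (adj \<xi> h))" .
qed

lemma thetaw_conj:
  assumes t: "t \<ge> 0" and b': "b' \<in> commutant B"
  shows "thetaw B \<eta> t (\<xi> \<circ> b' \<circ> adj \<xi>) = Upsilon t \<circ> b' \<circ> adj (Upsilon t)"
proof (rule thetaw_eqI[where B=B and \<eta>=\<eta>, OF dense_eta[OF t]])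
  show "bop (Upsilon t \<circ> b' \<circ> adj (Upsilon t))"
    using b' t by (intro bop_comp bop_adj bop_Upsilon) (simp_all add: commutant_def)
qed (use t b' in \<open>simp add: adj_Upsilon_eta commutant_apply Upsilon_apply\<close>)

lemma id_mem_commutant: "id \<in> commutant B"
  by (simp add: commutant_def bop_id)

lemma thetaw_projection:
  "t \<ge> 0 \<Longrightarrow> thetaw B \<eta> t (\<xi> \<circ> adj \<xi>) = Upsilon t \<circ> adj (Upsilon t)"
  using thetaw_conj[OF _ id_mem_commutant] by simp

lemma Hsub_eq_range: "t \<ge> 0 \<Longrightarrow> Hsub B \<eta> \<xi> t = range (Upsilon t)"
  unfolding Hsub_def by (simp only: thetaw_projection range_comp_right_inverse adj_Upsilon_Upsilon)

lemma unitary_onto_Upsilon: "t \<ge> 0 \<Longrightarrow> unitary_onto (Upsilon t) (Hsub B \<eta> \<xi> t)"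
  by (simp add: unitary_onto_def bop_Upsilon adj_Upsilon_Upsilon Hsub_eq_range)

lemma Upsilon_unique:
  assumes "\<And>x g. x \<in> B \<Longrightarrow> U (x g) = \<eta> t x (\<xi> g)"
  shows "U = Upsilon t"
proof
  show "U g = Upsilon t g" for g
    using assms[OF id_mem, of g] by (simp add: Upsilon_def)
qed

lemma Upsilon_characterization:
  "t \<ge> 0 \<Longrightarrow> unitary_onto U (Hsub B \<eta> \<xi> t) \<and> (\<forall>x\<in>B. \<forall>g. U (x g) = \<eta> t x (\<xi> g))
    \<longleftrightarrow> U = Upsilon t"
  using unitary_onto_Upsilon Upsilon_apply Upsilon_unique by blast

lemma rho_Upsilon:
  assumes t: "t \<ge> 0" and b: "b \<in> B"
  shows "\<rho> b (Upsilon t g) = Upsilon t (\<theta> t b g)"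
proof -
  have "\<rho> b (Upsilon t g) = \<eta> t (\<theta> t b \<circ> id) (\<xi> g)"
    unfolding Upsilon_def using t b id_mem by (simp only: eta_theta_left)
  also have "\<dots> = Upsilon t (\<theta> t b g)"
    using t b by (simp add: Upsilon_apply theta_mem)
  finally show ?thesis .
qed

lemma adj_Upsilon_rho:
  assumes t: "t \<ge> 0" and b: "b \<in> B"
  shows "adj (Upsilon t) (\<rho> b h) = \<theta> t b (adj (Upsilon t) h)"
proof (rule cinner_ext)
  fix g
  have "cinner g (adj (Upsilon t) (\<rho> b h)) = cinner (\<rho> (adj b) (Upsilon t g)) h"
    using t b by (simp add: cinner_adj_right[OF bop_Upsilon, symmetric] cinner_adj_left bop_rho
        rho_adj)
  also have "\<dots> = cinner g (\<theta> t b (adj (Upsilon t) h))"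
    using t b by (simp add: rho_Upsilon adj_mem theta_adj cinner_adj_right bop_Upsilon
        cinner_adj_left bop_mem theta_mem)
  finally show "cinner g (adj (Upsilon t) (\<rho> b h)) = cinner g (\<theta> t b (adj (Upsilon t) h))" .
qed

lemma Upsilon_comp_mem_Eprime:
  assumes t: "t \<ge> 0" and x': "x' \<in> intertwiners B \<theta> t"
  shows "Upsilon t \<circ> x' \<in> Eprime B \<rho>"
  using t x' unfolding Eprime_def
  by (auto simp: bop_comp bop_Upsilon intertwiners_bop intertwiners_apply rho_Upsilon)

lemma adj_Upsilon_comp_mem_intertwiners:
  assumes t: "t \<ge> 0" and y': "y' \<in> Eprime B \<rho>"
  shows "adj (Upsilon t) \<circ> y' \<in> intertwiners B \<theta> t"
  using t y' unfolding intertwiners_def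
  by (auto simp: bop_comp bop_adj bop_Upsilon Eprime_bop Eprime_apply adj_Upsilon_rho[symmetric])

lemma image_Upsilon_intertwiners:
  assumes t: "t \<ge> 0"
  shows "(\<lambda>x'. Upsilon t \<circ> x') ` intertwiners B \<theta> t = Fprime B \<rho> \<eta> \<xi> t"
proof -
  have F: "Fprime B \<rho> \<eta> \<xi> t = (\<lambda>y'. Upsilon t \<circ> (adj (Upsilon t) \<circ> y')) ` Eprime B \<rho>"
    unfolding Fprime_def thetaw_projection[OF t] by (auto simp: comp_assoc)
  show ?thesis
    unfolding F
  proof (intro subset_antisym image_subsetI)
    fix x' assume "x' \<in> intertwiners B \<theta> t"
    moreover have "Upsilon t \<circ> x' = Upsilon t \<circ> (adj (Upsilon t) \<circ> (Upsilon t \<circ> x'))"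
      using t by (simp add: comp_assoc[symmetric] adj_Upsilon_Upsilon)
    ultimately show "Upsilon t \<circ> x' \<in> (\<lambda>y'. Upsilon t \<circ> (adj (Upsilon t) \<circ> y')) ` Eprime B \<rho>"
      using t Upsilon_comp_mem_Eprime by blast
  next
    fix y' assume "y' \<in> Eprime B \<rho>"
    then show "Upsilon t \<circ> (adj (Upsilon t) \<circ> y') \<in> (\<lambda>x'. Upsilon t \<circ> x') ` intertwiners B \<theta> t"
      using t adj_Upsilon_comp_mem_intertwiners by blast
  qed
qed

lemma Upsilon_comp_commutant:
  "t \<ge> 0 \<Longrightarrow> b' \<in> commutant B \<Longrightarrow>
    Upsilon t \<circ> (b' \<circ> x') = thetaw B \<eta> t (\<xi> \<circ> b' \<circ> adj \<xi>) \<circ> (Upsilon t \<circ> x')"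
  by (simp add: thetaw_conj fun_eq_iff)

lemma thetaw_Upsilon_intertwiner:
  assumes s: "s \<ge> 0" and t: "t \<ge> 0" and x': "x' \<in> intertwiners B \<theta> s"
  shows "thetaw B \<eta> t ((Upsilon s \<circ> x') \<circ> adj \<xi>) = Upsilon (s + t) \<circ> x' \<circ> adj (Upsilon t)"
proof (rule thetaw_eqI[where B=B and \<eta>=\<eta>, OF dense_eta[OF t]])
  show "bop (Upsilon (s + t) \<circ> x' \<circ> adj (Upsilon t))"
    using s t x' by (intro bop_comp bop_adj bop_Upsilon intertwiners_bop) simp_all
  fix x h assume x: "x \<in> B"
  have "\<eta> t x ((Upsilon s \<circ> x' \<circ> adj \<xi>) h) = \<eta> (t + s) (\<theta> s x \<circ> id) (\<xi> (x' (adj \<xi> h)))"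
    unfolding Upsilon_def using eta_add[OF t s x id_mem] by simp
  also have "\<dots> = Upsilon (s + t) (x' (x (adj \<xi> h)))"
    using s t x x' by (simp add: Upsilon_apply theta_mem intertwiners_apply[symmetric] add.commute)
  finally show "(Upsilon (s + t) \<circ> x' \<circ> adj (Upsilon t)) (\<eta> t x h) = \<eta> t x ((Upsilon s \<circ> x' \<circ> adj \<xi>) h)"
    using t x by (simp add: adj_Upsilon_eta)
qed

lemma Upsilon_product:
  "s \<ge> 0 \<Longrightarrow> t \<ge> 0 \<Longrightarrow> x' \<in> intertwiners B \<theta> s \<Longrightarrow>
    Upsilon (s + t) \<circ> (x' \<circ> y') = thetaw B \<eta> t ((Upsilon s \<circ> x') \<circ> adj \<xi>) \<circ> (Upsilon t \<circ> y')"
  by (simp add: thetaw_Upsilon_intertwiner fun_eq_iff)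

end

theorem proposition4p10:
  fixes B :: "('g::chilbert \<Rightarrow> 'g) set"
    and \<theta> :: "real \<Rightarrow> ('g \<Rightarrow> 'g) \<Rightarrow> ('g \<Rightarrow> 'g)"
    and \<rho> :: "('g \<Rightarrow> 'g) \<Rightarrow> ('h::chilbert \<Rightarrow> 'h)"
    and \<eta> :: "real \<Rightarrow> ('g \<Rightarrow> 'g) \<Rightarrow> ('h \<Rightarrow> 'h)"
    and \<xi> :: "'g \<Rightarrow> 'h"
  assumes vN: "von_neumann_algebra B"
    and E0: "E0_semigroup B \<theta>"
    and faithful: "faithful_semigroup B \<theta>"
    and sc: "strongly_continuous_semigroup B \<theta>"
    and dil: "right_dilation B \<theta> \<rho> \<eta>"
    and xi_in: "\<xi> \<in> Eprime B \<rho>"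
    and xi_unit: "adj \<xi> \<circ> \<xi> = id"
  shows "(\<forall>t\<ge>0. \<exists>!U. unitary_onto U (Hsub B \<eta> \<xi> t)
              \<and> (\<forall>x\<in>B. \<forall>g. U (x g) = \<eta> t x (\<xi> g)))
    \<and> (\<forall>\<Upsilon> :: real \<Rightarrow> 'g \<Rightarrow> 'h.
         (\<forall>t\<ge>0. unitary_onto (\<Upsilon> t) (Hsub B \<eta> \<xi> t)
              \<and> (\<forall>x\<in>B. \<forall>g. \<Upsilon> t (x g) = \<eta> t x (\<xi> g))) \<longrightarrow>
         (\<forall>t\<ge>0. (\<lambda>x'. \<Upsilon> t \<circ> x') ` intertwiners B \<theta> t = Fprime B \<rho> \<eta> \<xi> t
            \<and> (\<forall>x'\<in>intertwiners B \<theta> t. \<forall>y'\<in>intertwiners B \<theta> t.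
                  adj (\<Upsilon> t \<circ> x') \<circ> (\<Upsilon> t \<circ> y') = adj x' \<circ> y')
            \<and> (\<forall>x'\<in>intertwiners B \<theta> t. \<forall>y'\<in>intertwiners B \<theta> t.
                  \<Upsilon> t \<circ> op_add x' y' = op_add (\<Upsilon> t \<circ> x') (\<Upsilon> t \<circ> y'))
            \<and> (\<forall>c. \<forall>x'\<in>intertwiners B \<theta> t.
                  \<Upsilon> t \<circ> op_scale c x' = op_scale c (\<Upsilon> t \<circ> x'))
            \<and> (\<forall>b'\<in>commutant B. \<forall>x'\<in>intertwiners B \<theta> t.
                  \<Upsilon> t \<circ> (x' \<circ> b') = (\<Upsilon> t \<circ> x') \<circ> b'
                \<and> \<Upsilon> t \<circ> (b' \<circ> x') = thetaw B \<eta> t (\<xi> \<circ> b' \<circ> adj \<xi>) \<circ> (\<Upsilon> t \<circ> x')))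
       \<and> (\<forall>s\<ge>0. \<forall>t\<ge>0. \<forall>x'\<in>intertwiners B \<theta> s. \<forall>y'\<in>intertwiners B \<theta> t.
            \<Upsilon> (s + t) \<circ> (x' \<circ> y')
              = thetaw B \<eta> t ((\<Upsilon> s \<circ> x') \<circ> adj \<xi>) \<circ> (\<Upsilon> t \<circ> y')))"
proof -
  interpret dilation_with_unit_vector B \<theta> \<rho> \<eta> \<xi>
    using vN E0 dil xi_in xi_unit by unfold_locales
  show ?thesis
    by (simp add: Upsilon_characterization image_Upsilon_intertwiners adj_comp_isometry comp_op_add
        comp_op_scale comp_assoc bop_Upsilon adj_Upsilon_Upsilon intertwiners_bop
        Upsilon_comp_commutant Upsilon_product)
qed

end
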